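(* For $n\ge3$ and $1\le k_1<k_2\le n-1$, $$\begin{aligned}E\Big[E[1_{k_2}^{(n)}\mid\mathcal{Y}_n]\,E[1_{k_1}^{(n)}\mid\mathcal{Y}_n]\Big]={}&\frac{4(n+1)^2}{(n-1)^2(k_1+1)(k_1+2)(k_2+1)(k_2+2)}\\&-\frac{8(n+1)\,(3n-(k_2-2))\,(n-(k_2+1))}{n(n-1)^2(k_1+1)(k_1+2)(k_2+1)(k_2+2)(k_2+3)(k_2+4)}.\end{aligned}$$
   Context: Fix $n\ge 3$. A Yule tree with speciation rate 1 on $n$ tips: start with a single lineage; each lineage independently splits into two at rate 1; the process is stopped just before the $n$-th speciation event, so the tree has $n$ tips and $n-1$ speciation (internal) nodes, numbered $1,\dots,n-1$ chronologically from the root; at each speciation the splitting lineage is uniformly chosen among current lineages. $\mathcal{Y}_n$ is the σ-field generated by the tree (topology and branch lengths). For $1\le k\le n-1$, $1_k^{(n)}$ is the indicator that an unordered pair of distinct tips, chosen uniformly at random (independently of everything else given the tree), has its most recent common ancestor at the $k$-th speciation event; thus $E[1_k^{(n)}\mid\mathcal{Y}_n]$ is the fraction of the $\binom n2$ pairs of tips that coalesce at the $k$-th speciation event. *)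

theory Defs
  imports "HOL-Probability.Probability"
begin

text \<open>Ranked topology of a Yule tree, encoded by the sequence of splitting choices.
  Before the j-th speciation event (j = 1..n-1) there are j lineages, indexed 0..j-1.
  The j-th entry cs!(j-1) is the index of the splitting lineage, chosen uniformly in {0..<j}.
  Convention: the splitting lineage i is replaced by its two daughters, which get
  indices i and j (the new one is appended).  Tips of the final tree are 0..n-1.\<close>

fun yule_choices :: "nat \<Rightarrow> nat list pmf" where
  "yule_choices 0 = return_pmf []"
| "yule_choices (Suc m) =
     bind_pmf (yule_choices m) (\<lambda>cs. map_pmf (\<lambda>c. cs @ [c]) (pmf_of_set {0..<Suc m}))"

text \<open>Index at time j (j lineages) of the ancestor of lineage i at time j+1.\<close>
definition parent_lin :: "nat list \<Rightarrow> nat \<Rightarrow> nat \<Rightarrow> nat" where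
  "parent_lin cs j i = (if i = j then cs ! (j - 1) else i)"

text \<open>Index at time m (m lineages) of the ancestral lineage of tip t of the n-tip tree.\<close>
definition anc_lin :: "nat \<Rightarrow> nat list \<Rightarrow> nat \<Rightarrow> nat \<Rightarrow> nat" where
  "anc_lin n cs m t = foldr (parent_lin cs) [m..<n] t"

definition coal_at :: "nat \<Rightarrow> nat list \<Rightarrow> nat \<Rightarrow> nat \<Rightarrow> nat \<Rightarrow> bool" where
  "coal_at n cs k a b \<longleftrightarrow>
     anc_lin n cs (Suc k) a \<noteq> anc_lin n cs (Suc k) b \<and> anc_lin n cs k a = anc_lin n cs k b"

text \<open>E[1_k^(n) | Y_n]: fraction of the (n choose 2) unordered pairs of tips coalescing
  at the k-th speciation event.\<close>
definition coal_frac :: "nat \<Rightarrow> nat list \<Rightarrow> nat \<Rightarrow> real" where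
  "coal_frac n cs k =
     real (card {(a, b). a < b \<and> b < n \<and> coal_at n cs k a b}) / real (n choose 2)"

end

theory Submission
  imports Defs
begin

text \<open>
  Let L_k and R_k be the numbers of tips below the two daughter lineages created at the k-th
  speciation. A pair of tips coalesces there iff it has one tip in each daughter clade, so
  E[1_k | Y_n] = L_k R_k / (n choose 2). While the tree grows, clade sizes evolve as a Polya urn:
  the new tip falls into a clade with probability proportional to its size. A product of sizes
  of disjoint clades of total degree r is then an eigenfunction of the growth step, with
  eigenvalue (m + r) / m at m tips, so its expectation grows like the rising factorial of n.
  For k1 < k2 the clades of event k2 are disjoint from those of event k1, unless the lineage
  splitting at event k2 descends from one of the daughters of event k1; in that case the
  degree-4 product L2 R2 L1 R1 must be corrected by twice a degree-3 cross term to become an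
  eigenfunction. Both expectations are computed at n = k2 + 1 from E[L1 R1], which is of degree 2.
\<close>

definition valid_choices :: "nat list \<Rightarrow> bool" where
  "valid_choices cs \<longleftrightarrow> (\<forall>j<length cs. cs ! j \<le> j)"

lemma set_pmf_yule_choices:
  "cs \<in> set_pmf (yule_choices m) \<Longrightarrow> length cs = m \<and> valid_choices cs"
proof (induction m arbitrary: cs)
  case 0
  then show ?case by (simp add: valid_choices_def)
next
  case (Suc m)
  then obtain ds c where "ds \<in> set_pmf (yule_choices m)" "c \<le> m" "cs = ds @ [c]"
    by (auto simp: set_pmf_of_set)
  with Suc.IH show ?case by (auto simp: valid_choices_def nth_append less_Suc_eq)
qed

lemma finite_set_pmf_yule_choices: "finite (set_pmf (yule_choices m))"
  by (induction m) (auto simp: set_pmf_of_set)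

lemma integrable_yule_choices: "integrable (measure_pmf (yule_choices m)) (f :: nat list \<Rightarrow> real)"
  by (rule integrable_measure_pmf_finite[OF finite_set_pmf_yule_choices])

lemma expectation_yule_choices_Suc:
  "measure_pmf.expectation (yule_choices (Suc m)) (f :: nat list \<Rightarrow> real) =
   measure_pmf.expectation (yule_choices m) (\<lambda>cs. (\<Sum>c<Suc m. f (cs @ [c])) / real (Suc m))"
proof -
  have "measure_pmf.expectation (yule_choices (Suc m)) f =
     (\<Sum>cs\<in>set_pmf (yule_choices m). pmf (yule_choices m) cs *\<^sub>R
        measure_pmf.expectation (map_pmf (\<lambda>c. cs @ [c]) (pmf_of_set {0..<Suc m})) f)"
    unfolding yule_choices.simps
    by (rule pmf_expectation_bind) (auto simp: finite_set_pmf_yule_choices set_pmf_of_set)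
  also have "\<dots> = (\<Sum>cs\<in>set_pmf (yule_choices m). pmf (yule_choices m) cs *\<^sub>R
        ((\<Sum>c<Suc m. f (cs @ [c])) / real (Suc m)))"
    by (intro sum.cong refl, simp only: integral_map_pmf, subst integral_pmf_of_set)
       (auto simp: atLeast0LessThan)
  also have "\<dots> = measure_pmf.expectation (yule_choices m) (\<lambda>cs. (\<Sum>c<Suc m. f (cs @ [c])) / real (Suc m))"
    by (rule integral_measure_pmf[symmetric]) (auto simp: finite_set_pmf_yule_choices)
  finally show ?thesis .
qed

lemma expectation_yule_choices_cong:
  assumes "\<And>cs. length cs = m \<Longrightarrow> valid_choices cs \<Longrightarrow> f cs = g cs"
  shows "measure_pmf.expectation (yule_choices m) f = measure_pmf.expectation (yule_choices m) (g :: nat list \<Rightarrow> real)"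
  by (rule integral_cong_AE) (auto intro!: AE_pmfI dest!: set_pmf_yule_choices simp: assms)

lemma expectation_yule_choices_step:
  assumes "0 < m"
    and "\<And>cs. length cs = m - 1 \<Longrightarrow> valid_choices cs \<Longrightarrow> (\<Sum>c<m. f (cs @ [c])) = a * g cs"
  shows "measure_pmf.expectation (yule_choices m) f
         = a / real m * measure_pmf.expectation (yule_choices (m - 1)) (g :: nat list \<Rightarrow> real)"
proof -
  obtain m' where m: "m = Suc m'" using assms(1) gr0_conv_Suc by blast
  have "measure_pmf.expectation (yule_choices m) f =
        measure_pmf.expectation (yule_choices m') (\<lambda>cs. a / real m * g cs)"
    unfolding m expectation_yule_choices_Suc
    by (rule expectation_yule_choices_cong) (use assms(2) m in simp)
  then show ?thesis by (simp add: m)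
qed

lemma pochhammer_Suc_arg:
  fixes m :: real
  assumes "m \<noteq> 0"
  shows "(m + real r) / m * pochhammer m r = pochhammer (m + 1) r"
proof -
  have "m * pochhammer (m + 1) r = (m + real r) * pochhammer m r"
    by (metis pochhammer_rec pochhammer_rec')
  with assms show ?thesis by (simp add: field_simps)
qed

lemma expectation_yule_choices_rising:
  assumes "0 < m0" "m0 \<le> n"
    and step: "\<And>m cs. m0 \<le> m \<Longrightarrow> length cs = m - 1 \<Longrightarrow> valid_choices cs \<Longrightarrow>
         (\<Sum>c<m. f (Suc m) (cs @ [c])) = (real m + real r) * f m cs"
  shows "measure_pmf.expectation (yule_choices (n - 1)) (f n) =
         measure_pmf.expectation (yule_choices (m0 - 1)) (f m0)
         * pochhammer (real n) r / pochhammer (real m0) r"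
  using assms(2)
proof (induction n rule: dec_induct)
  case base
  have "pochhammer (real m0) r \<noteq> 0"
    using assms(1) by (simp add: pochhammer_eq_0_iff)
  then show ?case by simp
next
  case (step m)
  then have "0 < m" using assms(1) by simp
  have "measure_pmf.expectation (yule_choices (Suc m - 1)) (f (Suc m)) =
        (real m + real r) / real m * measure_pmf.expectation (yule_choices (m - 1)) (f m)"
    using expectation_yule_choices_step[OF \<open>0 < m\<close> assms(3)[OF step.hyps(1)]] by simp
  also have "\<dots> = measure_pmf.expectation (yule_choices (m0 - 1)) (f m0)
         * ((real m + real r) / real m * pochhammer (real m) r) / pochhammer (real m0) r"
    unfolding step.IH by simp
  also have "\<dots> = measure_pmf.expectation (yule_choices (m0 - 1)) (f m0)
         * pochhammer (real (Suc m)) r / pochhammer (real m0) r"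
    using pochhammer_Suc_arg[of "real m" r] \<open>0 < m\<close> by (simp add: add.commute)
  finally show ?case .
qed

lemma valid_choices_nth_less:
  "valid_choices cs \<Longrightarrow> 1 \<le> k \<Longrightarrow> k \<le> length cs \<Longrightarrow> cs ! (k - 1) < k"
  unfolding valid_choices_def
  by (metis One_nat_def Suc_le_eq Suc_pred diff_less le_imp_less_Suc less_one not_less)

lemma anc_lin_self [simp]: "anc_lin m cs m t = t"
  by (simp add: anc_lin_def)

lemma anc_lin_Suc: "m \<le> n \<Longrightarrow> anc_lin (Suc n) cs m t = anc_lin n cs m (parent_lin cs n t)"
  by (simp add: anc_lin_def)

lemma anc_lin_step_down: "k < n \<Longrightarrow> anc_lin n cs k t = parent_lin cs k (anc_lin n cs (Suc k) t)"
  by (simp add: anc_lin_def upt_conv_Cons)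

lemma anc_lin_trans:
  assumes "m1 \<le> m2" "m2 \<le> n"
  shows "anc_lin n cs m1 t = anc_lin m2 cs m1 (anc_lin n cs m2 t)"
proof -
  have "[m1..<n] = [m1..<m2] @ [m2..<n]"
    using upt_add_eq_append[OF assms(1), of "n - m2"] assms by simp
  then show ?thesis by (simp add: anc_lin_def)
qed

lemma anc_lin_append:
  assumes "1 \<le> m" "n \<le> length cs + 1"
  shows "anc_lin n (cs @ ds) m t = anc_lin n cs m t"
  unfolding anc_lin_def
proof (rule foldr_cong)
  fix j i assume "j \<in> set [m..<n]"
  then have "1 \<le> j" "j - 1 < length cs" using assms by auto
  then show "parent_lin (cs @ ds) j i = parent_lin cs j i"
    by (simp add: parent_lin_def nth_append)
qed auto

lemma anc_lin_snoc:
  assumes "length cs + 1 = n" "1 \<le> m" "m \<le> n"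
  shows "anc_lin (Suc n) (cs @ [c]) m t = anc_lin n cs m (if t = n then c else t)"
proof -
  have "parent_lin (cs @ [c]) n t = (if t = n then c else t)"
    using assms(1) by (auto simp: parent_lin_def)
  then show ?thesis using assms by (simp add: anc_lin_Suc anc_lin_append)
qed

lemma anc_lin_daughters:
  assumes "m \<le> k" "k < n" "cs ! (k - 1) \<noteq> k"
    and "anc_lin n cs (Suc k) t = cs ! (k - 1) \<or> anc_lin n cs (Suc k) t = k"
  shows "anc_lin n cs m t = anc_lin k cs m (cs ! (k - 1))"
proof -
  have "anc_lin n cs k t = cs ! (k - 1)"
    using assms(2-4) by (auto simp: anc_lin_step_down parent_lin_def)
  then show ?thesis using assms(1,2) anc_lin_trans[of m k n cs t] by simp
qed

definition clade_size :: "nat \<Rightarrow> nat list \<Rightarrow> nat \<Rightarrow> nat \<Rightarrow> nat" where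
  "clade_size n cs m i = card {t. t < n \<and> anc_lin n cs m t = i}"

lemma clade_size_self: "i < m \<Longrightarrow> clade_size m cs m i = 1"
proof -
  assume "i < m"
  then have "{t. t < m \<and> anc_lin m cs m t = i} = {i}" by auto
  then show ?thesis by (simp add: clade_size_def)
qed

lemma clade_size_snoc:
  assumes "length cs + 1 = n" "1 \<le> m" "m \<le> n" "c < n"
  shows "clade_size (Suc n) (cs @ [c]) m i = clade_size n cs m i + of_bool (anc_lin n cs m c = i)"
proof -
  have "{t. t < Suc n \<and> anc_lin (Suc n) (cs @ [c]) m t = i} =
        {t. t < n \<and> anc_lin n cs m t = i} \<union> (if anc_lin n cs m c = i then {n} else {})"
    using assms by (auto simp: anc_lin_snoc less_Suc_eq)
  then show ?thesis by (simp add: clade_size_def)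
qed

lemma sum_of_bool_anc_lin: "(\<Sum>c<n. of_bool (anc_lin n cs m c = i) :: real) = real (clade_size n cs m i)"
proof -
  have "{..<n} \<inter> {c. anc_lin n cs m c = i} = {t. t < n \<and> anc_lin n cs m t = i}" by auto
  then show ?thesis by (simp add: sum_of_bool_eq clade_size_def)
qed

lemma card_pairs_across:
  fixes A B :: "'a::linorder set"
  assumes "finite A" "finite B" "A \<inter> B = {}"
  shows "card {(a, b). a < b \<and> (a \<in> A \<and> b \<in> B \<or> a \<in> B \<and> b \<in> A)} = card A * card B"
proof -
  define L where "L = {p \<in> A \<times> B. fst p < snd p}"
  define G where "G = {p \<in> A \<times> B. snd p < fst p}"
  have fin: "finite L" "finite G" using assms(1,2) by (auto simp: L_def G_def)
  have AB: "A \<times> B = L \<union> G" using assms(3) by (auto simp: L_def G_def neq_iff)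
  have "{(a, b). a < b \<and> (a \<in> A \<and> b \<in> B \<or> a \<in> B \<and> b \<in> A)} = L \<union> prod.swap ` G"
    by (auto simp: L_def G_def image_iff)
  moreover have "L \<inter> prod.swap ` G = {}" using assms(3) by (auto simp: L_def G_def)
  moreover have "L \<inter> G = {}" by (auto simp: L_def G_def)
  ultimately show ?thesis
    using fin by (simp add: card_Un_disjoint card_image AB flip: card_cartesian_product)
qed

lemma polya_urn_sum_prod:
  fixes ps :: "(real \<times> (nat \<Rightarrow> bool)) list"
  assumes disjoint: "\<And>c. c < n \<Longrightarrow> length (filter (\<lambda>p. snd p c) ps) \<le> 1"
    and counts: "\<And>p. p \<in> set ps \<Longrightarrow> (\<Sum>c<n. of_bool (snd p c)) = fst p"
  shows "(\<Sum>c<n. \<Prod>p\<leftarrow>ps. fst p + of_bool (snd p c)) = (real n + real (length ps)) * (\<Prod>p\<leftarrow>ps. fst p)"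
  using assms
proof (induction ps)
  case Nil
  then show ?case by simp
next
  case (Cons p ps)
  obtain x d where p: "p = (x, d)" by fastforce
  have "(\<Prod>q\<leftarrow>ps. fst q + of_bool (snd q c)) = (\<Prod>q\<leftarrow>ps. fst q)" if "c < n" "d c" for c
  proof -
    have "filter (\<lambda>q. snd q c) ps = []"
      using Cons.prems(1)[OF \<open>c < n\<close>] \<open>d c\<close> p by simp
    then show ?thesis by (simp add: filter_empty_conv cong: map_cong)
  qed
  then have "(\<Sum>c<n. \<Prod>q\<leftarrow>p # ps. fst q + of_bool (snd q c)) =
      (\<Sum>c<n. x * (\<Prod>q\<leftarrow>ps. fst q + of_bool (snd q c)) + of_bool (d c) * (\<Prod>q\<leftarrow>ps. fst q))"
    by (intro sum.cong) (auto simp: p algebra_simps)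
  also have "\<dots> = x * ((real n + real (length ps)) * (\<Prod>q\<leftarrow>ps. fst q)) + x * (\<Prod>q\<leftarrow>ps. fst q)"
  proof -
    have "length (filter (\<lambda>q. snd q c) ps) \<le> 1" if "c < n" for c
      using Cons.prems(1)[OF that] by (simp split: if_splits)
    with Cons.prems(2) have "(\<Sum>c<n. \<Prod>q\<leftarrow>ps. fst q + of_bool (snd q c)) =
        (real n + real (length ps)) * (\<Prod>q\<leftarrow>ps. fst q)"
      by (intro Cons.IH) auto
    moreover have "(\<Sum>c<n. of_bool (d c) :: real) = x" using Cons.prems(2)[of p] p by simp
    ultimately show ?thesis by (simp add: sum.distrib flip: sum_distrib_left sum_distrib_right)
  qed
  finally show ?case by (simp add: p algebra_simps)
qed

lemma polya_urn_sum_nested: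
  fixes a b p q :: real
  assumes a: "(\<Sum>c<n. of_bool (da c)) = a" and b: "(\<Sum>c<n. of_bool (db c)) = b"
    and p: "(\<Sum>c<n. of_bool (dp c)) = p" and q: "(\<Sum>c<n. of_bool (dq c)) = q"
    and disjoint: "\<And>c. \<not> (da c \<and> db c)" "\<And>c. \<not> (dp c \<and> dq c)"
    and nested: "\<And>c. da c \<Longrightarrow> dp c" "\<And>c. db c \<Longrightarrow> dp c"
  shows "(\<Sum>c<n. (a + of_bool (da c)) * (b + of_bool (db c)) * (p + 2 + of_bool (dp c)) * (q + of_bool (dq c)))
         = (real n + 4) * (a * b * (p + 2) * q)"
proof -
  have "(\<Sum>c<n. (a + of_bool (da c)) * (b + of_bool (db c)) * (p + 2 + of_bool (dp c)) * (q + of_bool (dq c)))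
      = (\<Sum>c<n. a * b * (p + 2) * q + of_bool (da c) * (b * (p + 3) * q) + of_bool (db c) * (a * (p + 3) * q)
              + of_bool (dp c) * (a * b * q) + of_bool (dq c) * (a * b * (p + 2)))"
    using disjoint nested
    by (intro sum.cong refl) (auto simp: algebra_simps)
  also have "\<dots> = real n * (a * b * (p + 2) * q) + a * (b * (p + 3) * q) + b * (a * (p + 3) * q)
              + p * (a * b * q) + q * (a * b * (p + 2))"
    by (simp add: sum.distrib a b p q flip: sum_distrib_right)
  finally show ?thesis by (simp add: algebra_simps)
qed

text \<open>
  The arguments a, b are the daughter clade sizes of the later event and p, q those of the
  earlier one; iP (iQ) records that the later event happens inside the p-clade (q-clade), in
  which case the a- and b-clades are nested in it.
\<close>
definition cross_poly :: "bool \<Rightarrow> bool \<Rightarrow> real \<Rightarrow> real \<Rightarrow> real \<Rightarrow> real \<Rightarrow> real" where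
  "cross_poly iP iQ a b p q = a * b * (of_bool iP * q + of_bool iQ * p)"

definition corrected_poly :: "bool \<Rightarrow> bool \<Rightarrow> real \<Rightarrow> real \<Rightarrow> real \<Rightarrow> real \<Rightarrow> real" where
  "corrected_poly iP iQ a b p q = a * b * p * q + 2 * cross_poly iP iQ a b p q"

lemma polya_urn_cross_corrected_left:
  fixes a b p q :: real
  assumes a: "(\<Sum>c<n. of_bool (da c)) = a" and b: "(\<Sum>c<n. of_bool (db c)) = b"
    and p: "(\<Sum>c<n. of_bool (dp c)) = p" and q: "(\<Sum>c<n. of_bool (dq c)) = q"
    and disjoint: "\<And>c. \<not> (da c \<and> db c)" "\<And>c. \<not> (dp c \<and> dq c)"
    and nested: "\<And>c. da c \<Longrightarrow> dp c" "\<And>c. db c \<Longrightarrow> dp c"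
  shows "(\<Sum>c<n. cross_poly True False (a + of_bool (da c)) (b + of_bool (db c))
                   (p + of_bool (dp c)) (q + of_bool (dq c))) = (real n + 3) * cross_poly True False a b p q"
    and "(\<Sum>c<n. corrected_poly True False (a + of_bool (da c)) (b + of_bool (db c))
                   (p + of_bool (dp c)) (q + of_bool (dq c))) = (real n + 4) * corrected_poly True False a b p q"
proof -
  have "(\<Sum>c<n. \<Prod>r\<leftarrow>[(a, da), (b, db), (q, dq)]. fst r + of_bool (snd r c))
      = (real n + 3) * (\<Prod>r\<leftarrow>[(a, da), (b, db), (q, dq)]. fst r)"
    using polya_urn_sum_prod[of n "[(a, da), (b, db), (q, dq)]"] assms by fastforce
  then show "(\<Sum>c<n. cross_poly True False (a + of_bool (da c)) (b + of_bool (db c))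
                   (p + of_bool (dp c)) (q + of_bool (dq c))) = (real n + 3) * cross_poly True False a b p q"
    by (simp add: cross_poly_def mult.assoc)
  show "(\<Sum>c<n. corrected_poly True False (a + of_bool (da c)) (b + of_bool (db c))
                   (p + of_bool (dp c)) (q + of_bool (dq c))) = (real n + 4) * corrected_poly True False a b p q"
    using polya_urn_sum_nested[OF assms]
    by (simp add: corrected_poly_def cross_poly_def algebra_simps)
qed

lemma cross_poly_swap: "cross_poly iP iQ a b p q = cross_poly iQ iP a b q p"
  by (simp add: cross_poly_def algebra_simps)

lemma corrected_poly_swap: "corrected_poly iP iQ a b p q = corrected_poly iQ iP a b q p"
  by (simp add: corrected_poly_def cross_poly_swap)

lemma polya_urn_cross_corrected:
  fixes a b p q :: real
  assumes a: "(\<Sum>c<n. of_bool (da c)) = a" and b: "(\<Sum>c<n. of_bool (db c)) = b"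
    and p: "(\<Sum>c<n. of_bool (dp c)) = p" and q: "(\<Sum>c<n. of_bool (dq c)) = q"
    and disjoint: "\<And>c. \<not> (da c \<and> db c)" "\<And>c. \<not> (dp c \<and> dq c)" "\<not> (iP \<and> iQ)"
    and nested: "\<And>c. da c \<or> db c \<Longrightarrow> dp c = iP \<and> dq c = iQ"
  shows "(\<Sum>c<n. cross_poly iP iQ (a + of_bool (da c)) (b + of_bool (db c))
                   (p + of_bool (dp c)) (q + of_bool (dq c))) = (real n + 3) * cross_poly iP iQ a b p q" (is ?cross)
    and "(\<Sum>c<n. corrected_poly iP iQ (a + of_bool (da c)) (b + of_bool (db c))
                   (p + of_bool (dp c)) (q + of_bool (dq c))) = (real n + 4) * corrected_poly iP iQ a b p q" (is ?corrected)
proof -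
  consider "iP" "\<not> iQ" | "\<not> iP" "iQ" | "\<not> iP" "\<not> iQ" using disjoint(3) by blast
  then have "?cross \<and> ?corrected"
  proof cases
    case 1
    then show ?thesis
      using polya_urn_cross_corrected_left[OF a b p q disjoint(1,2)] nested by auto
  next
    case 2
    have "\<not> (dq c \<and> dp c)" for c using disjoint(2) by blast
    then show ?thesis
      using polya_urn_cross_corrected_left[OF a b q p disjoint(1)] nested 2
      by (simp add: cross_poly_swap[of iP] corrected_poly_swap[of iP] cross_poly_swap[of False]
          corrected_poly_swap[of False])
  next
    case 3
    then have "da c \<or> db c \<Longrightarrow> \<not> dp c \<and> \<not> dq c" for c using nested by blast
    then have "(\<Sum>c<n. \<Prod>r\<leftarrow>[(a, da), (b, db), (p, dp), (q, dq)]. fst r + of_bool (snd r c))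
        = (real n + real (length [(a, da), (b, db), (p, dp), (q, dq)]))
          * (\<Prod>r\<leftarrow>[(a, da), (b, db), (p, dp), (q, dq)]. fst r)"
      using a b p q disjoint(1,2) by (intro polya_urn_sum_prod) (auto split: if_splits)
    then show ?thesis
      using 3 by (simp add: corrected_poly_def cross_poly_def mult.assoc)
  qed
  then show ?cross ?corrected by auto
qed

lemma polya_urn_cross_corrected_first:
  fixes p q :: real
  assumes p: "(\<Sum>c<n. of_bool (dp c)) = p" and q: "(\<Sum>c<n. of_bool (dq c)) = q"
    and disjoint: "\<And>c. \<not> (dp c \<and> dq c)"
  shows "(\<Sum>c<n. cross_poly (dp c) (dq c) 1 1 (p + of_bool (dp c)) (q + of_bool (dq c))) = 2 * (p * q)"
    and "(\<Sum>c<n. corrected_poly (dp c) (dq c) 1 1 (p + of_bool (dp c)) (q + of_bool (dq c)))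
         = (real n + 6) * (p * q)"
proof -
  define inc where "inc c = q * of_bool (dp c) + p * of_bool (dq c)" for c
  have cross: "cross_poly (dp c) (dq c) 1 1 (p + of_bool (dp c)) (q + of_bool (dq c)) = inc c" for c
    using disjoint[of c] by (auto simp: cross_poly_def inc_def)
  have corrected: "corrected_poly (dp c) (dq c) 1 1 (p + of_bool (dp c)) (q + of_bool (dq c))
      = p * q + 3 * inc c" for c
    using disjoint[of c] by (auto simp: corrected_poly_def cross_poly_def inc_def algebra_simps)
  have sum_inc: "(\<Sum>c<n. inc c) = 2 * (p * q)"
    by (simp add: inc_def sum.distrib p q flip: sum_distrib_left)
  show "(\<Sum>c<n. cross_poly (dp c) (dq c) 1 1 (p + of_bool (dp c)) (q + of_bool (dq c))) = 2 * (p * q)"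
    by (simp add: cross sum_inc)
  show "(\<Sum>c<n. corrected_poly (dp c) (dq c) 1 1 (p + of_bool (dp c)) (q + of_bool (dq c)))
         = (real n + 6) * (p * q)"
    by (simp add: corrected sum.distrib sum_inc flip: sum_distrib_left) (simp add: algebra_simps)
qed

definition left_clade :: "nat \<Rightarrow> nat list \<Rightarrow> nat \<Rightarrow> real" where
  "left_clade n cs k = real (clade_size n cs (Suc k) (cs ! (k - 1)))"

definition right_clade :: "nat \<Rightarrow> nat list \<Rightarrow> nat \<Rightarrow> real" where
  "right_clade n cs k = real (clade_size n cs (Suc k) k)"

lemma coal_frac_eq_clades:
  assumes valid: "valid_choices cs" and len: "length cs + 1 = n" and k: "1 \<le> k" "k < n"
  shows "coal_frac n cs k = left_clade n cs k * right_clade n cs k / real (n choose 2)"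
proof -
  define u where "u = anc_lin n cs (Suc k)"
  define p where "p = cs ! (k - 1)"
  define A where "A = {t. t < n \<and> u t = p}"
  define B where "B = {t. t < n \<and> u t = k}"
  have "p < k" using valid_choices_nth_less[OF valid k(1)] len k by (simp add: p_def)
  have down: "anc_lin n cs k t = (if u t = k then p else u t)" for t
    by (simp add: anc_lin_step_down[OF k(2)] parent_lin_def p_def u_def)
  have coal: "coal_at n cs k a b \<longleftrightarrow> (a \<in> A \<and> b \<in> B \<or> a \<in> B \<and> b \<in> A)" if "a < b" "b < n" for a b
  proof -
    have "coal_at n cs k a b \<longleftrightarrow> u a \<noteq> u b \<and> anc_lin n cs k a = anc_lin n cs k b"
      by (simp add: coal_at_def u_def)
    also have "\<dots> \<longleftrightarrow> (u a = p \<and> u b = k \<or> u a = k \<and> u b = p)"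
      unfolding down using \<open>p < k\<close> by auto
    finally show ?thesis using that by (auto simp: A_def B_def)
  qed
  have "{(a, b). a < b \<and> b < n \<and> coal_at n cs k a b} =
      {(a, b). a < b \<and> (a \<in> A \<and> b \<in> B \<or> a \<in> B \<and> b \<in> A)}"
    using coal by (auto simp: A_def B_def)
  also have "card \<dots> = card A * card B"
    using \<open>p < k\<close> by (intro card_pairs_across) (auto simp: A_def B_def)
  finally show ?thesis
    by (simp add: coal_frac_def left_clade_def right_clade_def clade_size_def A_def B_def u_def p_def)
qed

lemma left_clade_snoc:
  assumes "length cs + 1 = n" "1 \<le> k" "k < n" "c < n"
  shows "left_clade (Suc n) (cs @ [c]) k = left_clade n cs k + of_bool (anc_lin n cs (Suc k) c = cs ! (k - 1))"
proof -
  have "k - 1 < length cs" using assms by simp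
  then have "(cs @ [c]) ! (k - 1) = cs ! (k - 1)" by (simp add: nth_append)
  then show ?thesis using assms by (simp add: left_clade_def clade_size_snoc)
qed

lemma right_clade_snoc:
  assumes "length cs + 1 = n" "1 \<le> k" "k < n" "c < n"
  shows "right_clade (Suc n) (cs @ [c]) k = right_clade n cs k + of_bool (anc_lin n cs (Suc k) c = k)"
  using assms by (simp add: right_clade_def clade_size_snoc)

definition descends_left :: "nat \<Rightarrow> nat \<Rightarrow> nat list \<Rightarrow> bool" where
  "descends_left k1 k2 cs \<longleftrightarrow> anc_lin k2 cs (Suc k1) (cs ! (k2 - 1)) = cs ! (k1 - 1)"

definition descends_right :: "nat \<Rightarrow> nat \<Rightarrow> nat list \<Rightarrow> bool" where
  "descends_right k1 k2 cs \<longleftrightarrow> anc_lin k2 cs (Suc k1) (cs ! (k2 - 1)) = k1"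

definition cross_moment :: "nat \<Rightarrow> nat \<Rightarrow> nat \<Rightarrow> nat list \<Rightarrow> real" where
  "cross_moment k1 k2 n cs = cross_poly (descends_left k1 k2 cs) (descends_right k1 k2 cs)
     (left_clade n cs k2) (right_clade n cs k2) (left_clade n cs k1) (right_clade n cs k1)"

definition corrected_moment :: "nat \<Rightarrow> nat \<Rightarrow> nat \<Rightarrow> nat list \<Rightarrow> real" where
  "corrected_moment k1 k2 n cs = corrected_poly (descends_left k1 k2 cs) (descends_right k1 k2 cs)
     (left_clade n cs k2) (right_clade n cs k2) (left_clade n cs k1) (right_clade n cs k1)"

lemma descends_left_right_append:
  assumes "1 \<le> k1" "k1 < k2" "k2 \<le> length cs"
  shows "descends_left k1 k2 (cs @ ds) = descends_left k1 k2 cs"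
    and "descends_right k1 k2 (cs @ ds) = descends_right k1 k2 cs"
proof -
  have "k1 - 1 < length cs" "k2 - 1 < length cs" using assms by auto
  then show "descends_left k1 k2 (cs @ ds) = descends_left k1 k2 cs"
    and "descends_right k1 k2 (cs @ ds) = descends_right k1 k2 cs"
    using assms by (simp_all add: descends_left_def descends_right_def anc_lin_append nth_append)
qed

lemma sum_moments_snoc:
  assumes k: "1 \<le> k1" "k1 < k2" "k2 < n" and len: "length cs + 1 = n" and valid: "valid_choices cs"
  shows "(\<Sum>c<n. cross_moment k1 k2 (Suc n) (cs @ [c])) = (real n + 3) * cross_moment k1 k2 n cs"
    and "(\<Sum>c<n. corrected_moment k1 k2 (Suc n) (cs @ [c])) = (real n + 4) * corrected_moment k1 k2 n cs"
proof -
  define x where "x = cs ! (k2 - 1)"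
  define y where "y = cs ! (k1 - 1)"
  define z where "z = anc_lin k2 cs (Suc k1) x"
  define da where "da c \<longleftrightarrow> anc_lin n cs (Suc k2) c = x" for c
  define db where "db c \<longleftrightarrow> anc_lin n cs (Suc k2) c = k2" for c
  define dp where "dp c \<longleftrightarrow> anc_lin n cs (Suc k1) c = y" for c
  define dq where "dq c \<longleftrightarrow> anc_lin n cs (Suc k1) c = k1" for c
  have "x < k2" "y < k1"
    using valid_choices_nth_less[OF valid] k len by (auto simp: x_def y_def)
  have "anc_lin n cs (Suc k1) c = z" if "da c \<or> db c" for c
    using anc_lin_daughters[of "Suc k1" k2 n cs c] that k \<open>x < k2\<close> by (auto simp: da_def db_def x_def z_def)
  then have nested: "dp c = (z = y) \<and> dq c = (z = k1)" if "da c \<or> db c" for c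
    using that by (simp add: dp_def dq_def)
  have desc: "descends_left k1 k2 cs = (z = y)" "descends_right k1 k2 cs = (z = k1)"
    by (simp_all add: descends_left_def descends_right_def x_def y_def z_def)
  have desc_snoc: "descends_left k1 k2 (cs @ [c]) = (z = y)" "descends_right k1 k2 (cs @ [c]) = (z = k1)" for c
    using descends_left_right_append[of k1 k2 cs "[c]"] desc k len by simp_all
  have snoc: "cross_moment k1 k2 (Suc n) (cs @ [c]) =
        cross_poly (z = y) (z = k1) (left_clade n cs k2 + of_bool (da c)) (right_clade n cs k2 + of_bool (db c))
          (left_clade n cs k1 + of_bool (dp c)) (right_clade n cs k1 + of_bool (dq c))
      \<and> corrected_moment k1 k2 (Suc n) (cs @ [c]) =
        corrected_poly (z = y) (z = k1) (left_clade n cs k2 + of_bool (da c)) (right_clade n cs k2 + of_bool (db c))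
          (left_clade n cs k1 + of_bool (dp c)) (right_clade n cs k1 + of_bool (dq c))" if "c < n" for c
    using that k len
    by (simp add: cross_moment_def corrected_moment_def desc_snoc left_clade_snoc
        right_clade_snoc da_def db_def dp_def dq_def x_def y_def)
  have current: "cross_moment k1 k2 n cs = cross_poly (z = y) (z = k1) (left_clade n cs k2) (right_clade n cs k2)
          (left_clade n cs k1) (right_clade n cs k1)
      \<and> corrected_moment k1 k2 n cs = corrected_poly (z = y) (z = k1) (left_clade n cs k2) (right_clade n cs k2)
          (left_clade n cs k1) (right_clade n cs k1)"
    by (simp add: cross_moment_def corrected_moment_def desc)
  have counts: "(\<Sum>c<n. of_bool (da c)) = left_clade n cs k2" "(\<Sum>c<n. of_bool (db c)) = right_clade n cs k2"
    "(\<Sum>c<n. of_bool (dp c)) = left_clade n cs k1" "(\<Sum>c<n. of_bool (dq c)) = right_clade n cs k1"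
    by (simp_all add: sum_of_bool_anc_lin left_clade_def right_clade_def da_def db_def dp_def dq_def x_def y_def)
  have disjoint: "\<not> (da c \<and> db c)" "\<not> (dp c \<and> dq c)" for c
    using \<open>x < k2\<close> \<open>y < k1\<close> by (auto simp: da_def db_def dp_def dq_def)
  have "\<not> (z = y \<and> z = k1)" using \<open>y < k1\<close> by simp
  note urn = polya_urn_cross_corrected[OF counts disjoint this nested]
  show "(\<Sum>c<n. cross_moment k1 k2 (Suc n) (cs @ [c])) = (real n + 3) * cross_moment k1 k2 n cs"
    using urn(1) snoc current by simp
  show "(\<Sum>c<n. corrected_moment k1 k2 (Suc n) (cs @ [c])) = (real n + 4) * corrected_moment k1 k2 n cs"
    using urn(2) snoc current by simp
qed

lemma sum_moments_first:
  assumes k: "1 \<le> k1" "k1 < k2" and len: "length cs + 1 = k2" and valid: "valid_choices cs"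
  shows "(\<Sum>c<k2. cross_moment k1 k2 (Suc k2) (cs @ [c])) = 2 * (left_clade k2 cs k1 * right_clade k2 cs k1)"
    and "(\<Sum>c<k2. corrected_moment k1 k2 (Suc k2) (cs @ [c]))
         = (real k2 + 6) * (left_clade k2 cs k1 * right_clade k2 cs k1)"
proof -
  define y where "y = cs ! (k1 - 1)"
  define dp where "dp c \<longleftrightarrow> anc_lin k2 cs (Suc k1) c = y" for c
  define dq where "dq c \<longleftrightarrow> anc_lin k2 cs (Suc k1) c = k1" for c
  have "y < k1"
    using valid_choices_nth_less[OF valid] k len by (auto simp: y_def)
  have snoc: "cross_moment k1 k2 (Suc k2) (cs @ [c]) =
        cross_poly (dp c) (dq c) 1 1 (left_clade k2 cs k1 + of_bool (dp c)) (right_clade k2 cs k1 + of_bool (dq c))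
      \<and> corrected_moment k1 k2 (Suc k2) (cs @ [c]) =
        corrected_poly (dp c) (dq c) 1 1 (left_clade k2 cs k1 + of_bool (dp c)) (right_clade k2 cs k1 + of_bool (dq c))"
    if "c < k2" for c
  proof -
    have nth: "(cs @ [c]) ! (k2 - 1) = c" "(cs @ [c]) ! (k1 - 1) = y"
      using k len by (auto simp: nth_append y_def)
    have "descends_left k1 k2 (cs @ [c]) = dp c" "descends_right k1 k2 (cs @ [c]) = dq c"
      unfolding descends_left_def descends_right_def nth using k len by (simp_all add: anc_lin_append dp_def dq_def)
    moreover have "left_clade (Suc k2) (cs @ [c]) k2 = 1" "right_clade (Suc k2) (cs @ [c]) k2 = 1"
      unfolding left_clade_def right_clade_def nth using that by (simp_all add: clade_size_self)
    ultimately show ?thesis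
      using that k len
      by (simp add: cross_moment_def corrected_moment_def left_clade_snoc right_clade_snoc dp_def dq_def y_def)
  qed
  have counts: "(\<Sum>c<k2. of_bool (dp c)) = left_clade k2 cs k1" "(\<Sum>c<k2. of_bool (dq c)) = right_clade k2 cs k1"
    by (simp_all add: sum_of_bool_anc_lin left_clade_def right_clade_def dp_def dq_def y_def)
  have disjoint: "\<not> (dp c \<and> dq c)" for c
    using \<open>y < k1\<close> by (auto simp: dp_def dq_def)
  note urn = polya_urn_cross_corrected_first[OF counts disjoint]
  show "(\<Sum>c<k2. cross_moment k1 k2 (Suc k2) (cs @ [c])) = 2 * (left_clade k2 cs k1 * right_clade k2 cs k1)"
    using urn(1) snoc by simp
  show "(\<Sum>c<k2. corrected_moment k1 k2 (Suc k2) (cs @ [c]))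
         = (real k2 + 6) * (left_clade k2 cs k1 * right_clade k2 cs k1)"
    using urn(2) snoc by simp
qed

lemma expectation_clade_product:
  assumes "1 \<le> k" "k < n"
  shows "measure_pmf.expectation (yule_choices (n - 1)) (\<lambda>cs. left_clade n cs k * right_clade n cs k)
         = real n * (real n + 1) / ((real k + 1) * (real k + 2))"
proof -
  have "measure_pmf.expectation (yule_choices (n - 1)) (\<lambda>cs. left_clade n cs k * right_clade n cs k)
      = measure_pmf.expectation (yule_choices (Suc k - 1)) (\<lambda>cs. left_clade (Suc k) cs k * right_clade (Suc k) cs k)
        * pochhammer (real n) 2 / pochhammer (real (Suc k)) 2"
  proof (rule expectation_yule_choices_rising[where f = "\<lambda>n cs. left_clade n cs k * right_clade n cs k"])
    fix m :: nat and cs assume m: "Suc k \<le> m" and len: "length cs = m - 1" and valid: "valid_choices cs"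
    define dp where "dp c \<longleftrightarrow> anc_lin m cs (Suc k) c = cs ! (k - 1)" for c
    define dq where "dq c \<longleftrightarrow> anc_lin m cs (Suc k) c = k" for c
    have "cs ! (k - 1) < k" using valid_choices_nth_less[OF valid] assms m len by simp
    then have disjoint: "\<not> (dp c \<and> dq c)" for c by (auto simp: dp_def dq_def)
    have "(\<Sum>c<m. of_bool (dp c)) = left_clade m cs k" "(\<Sum>c<m. of_bool (dq c)) = right_clade m cs k"
      by (simp_all add: sum_of_bool_anc_lin left_clade_def right_clade_def dp_def dq_def)
    then have "(\<Sum>c<m. \<Prod>r\<leftarrow>[(left_clade m cs k, dp), (right_clade m cs k, dq)]. fst r + of_bool (snd r c))
        = (real m + real (length [(left_clade m cs k, dp), (right_clade m cs k, dq)]))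
          * (\<Prod>r\<leftarrow>[(left_clade m cs k, dp), (right_clade m cs k, dq)]. fst r)"
      using disjoint by (intro polya_urn_sum_prod) auto
    then show "(\<Sum>c<m. left_clade (Suc m) (cs @ [c]) k * right_clade (Suc m) (cs @ [c]) k)
        = (real m + real 2) * (left_clade m cs k * right_clade m cs k)"
      using assms m len by (simp add: left_clade_snoc right_clade_snoc dp_def dq_def mult.assoc)
  qed (use assms in auto)
  also have "measure_pmf.expectation (yule_choices (Suc k - 1))
      (\<lambda>cs. left_clade (Suc k) cs k * right_clade (Suc k) cs k) = 1"
  proof -
    have "left_clade (Suc k) cs k * right_clade (Suc k) cs k = 1"
      if "length cs = k" "valid_choices cs" for cs
      using valid_choices_nth_less[OF that(2), of k] clade_size_self[of "cs ! (k - 1)" "Suc k" cs] that assms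
      by (simp add: left_clade_def right_clade_def clade_size_self)
    then show ?thesis by (subst expectation_yule_choices_cong[where g = "\<lambda>_. 1"]) auto
  qed
  finally show ?thesis by (simp add: pochhammer_Suc numeral_2_eq_2 algebra_simps)
qed

lemma expectation_moments:
  assumes k: "1 \<le> k1" "k1 < k2" "k2 < n"
  shows "measure_pmf.expectation (yule_choices (n - 1)) (cross_moment k1 k2 n)
         = 2 * (real n * (real n + 1) * (real n + 2))
           / ((real k1 + 1) * (real k1 + 2) * (real k2 + 2) * (real k2 + 3))" (is "_ = ?cross")
    and "measure_pmf.expectation (yule_choices (n - 1)) (corrected_moment k1 k2 n)
         = (real k2 + 6) * (real n * (real n + 1) * (real n + 2) * (real n + 3))
           / ((real k1 + 1) * (real k1 + 2) * (real k2 + 2) * (real k2 + 3) * (real k2 + 4))"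
         (is "_ = ?corrected")
proof -
  have "0 < k2" using k by simp
  have pos: "0 < real k2" "0 < real k1 + 1" "0 < real k1 + 2" "0 < real k2 + 1" "0 < real k2 + 2"
    "0 < real k2 + 3" "0 < real k2 + 4"
    using k by auto
  have product: "measure_pmf.expectation (yule_choices (k2 - 1)) (\<lambda>cs. left_clade k2 cs k1 * right_clade k2 cs k1)
      = real k2 * (real k2 + 1) / ((real k1 + 1) * (real k1 + 2))"
    using expectation_clade_product k by simp
  have "measure_pmf.expectation (yule_choices (n - 1)) (cross_moment k1 k2 n)
      = measure_pmf.expectation (yule_choices k2) (cross_moment k1 k2 (Suc k2))
        * pochhammer (real n) 3 / pochhammer (real (Suc k2)) 3"
    using k sum_moments_snoc(1) expectation_yule_choices_rising[of "Suc k2" n] by simp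
  also have "measure_pmf.expectation (yule_choices k2) (cross_moment k1 k2 (Suc k2))
      = 2 / real k2 * (real k2 * (real k2 + 1) / ((real k1 + 1) * (real k1 + 2)))"
    using expectation_yule_choices_step[OF \<open>0 < k2\<close>] sum_moments_first(1) k product by simp
  also have "2 / real k2 * (real k2 * (real k2 + 1) / ((real k1 + 1) * (real k1 + 2)))
        * pochhammer (real n) 3 / pochhammer (real (Suc k2)) 3 = ?cross"
    using pos by (simp add: pochhammer_Suc eval_nat_numeral) (simp add: divide_simps add.commute)
  finally show "measure_pmf.expectation (yule_choices (n - 1)) (cross_moment k1 k2 n) = ?cross" .
  have "measure_pmf.expectation (yule_choices (n - 1)) (corrected_moment k1 k2 n)
      = measure_pmf.expectation (yule_choices k2) (corrected_moment k1 k2 (Suc k2))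
        * pochhammer (real n) 4 / pochhammer (real (Suc k2)) 4"
    using k sum_moments_snoc(2) expectation_yule_choices_rising[of "Suc k2" n] by simp
  also have "measure_pmf.expectation (yule_choices k2) (corrected_moment k1 k2 (Suc k2))
      = (real k2 + 6) / real k2 * (real k2 * (real k2 + 1) / ((real k1 + 1) * (real k1 + 2)))"
    using expectation_yule_choices_step[OF \<open>0 < k2\<close>] sum_moments_first(2) k product by simp
  also have "(real k2 + 6) / real k2 * (real k2 * (real k2 + 1) / ((real k1 + 1) * (real k1 + 2)))
        * pochhammer (real n) 4 / pochhammer (real (Suc k2)) 4 = ?corrected"
    using pos by (simp add: pochhammer_Suc eval_nat_numeral) (simp add: divide_simps add.commute)
  finally show "measure_pmf.expectation (yule_choices (n - 1)) (corrected_moment k1 k2 n) = ?corrected" .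
qed

lemma mixed_moment_closed_form:
  fixes N a b :: real
  assumes "N > 1" "a \<ge> 0" "b \<ge> 0"
  shows "((b + 6) * (N * (N + 1) * (N + 2) * (N + 3)) / ((a + 1) * (a + 2) * (b + 2) * (b + 3) * (b + 4))
          - 2 * (2 * (N * (N + 1) * (N + 2)) / ((a + 1) * (a + 2) * (b + 2) * (b + 3))))
         / (N * (N - 1) / 2)\<^sup>2
       = 4 * (N + 1)^2 / ((N - 1)^2 * (a + 1) * (a + 2) * (b + 1) * (b + 2))
         - 8 * (N + 1) * (3 * N - (b - 2)) * (N - (b + 1)) /
           (N * (N - 1)^2 * (a + 1) * (a + 2) * (b + 1) * (b + 2) * (b + 3) * (b + 4))"
proof -
  have "N > 0" "N - 1 > 0" "a + 1 > 0" "a + 2 > 0" "b + 1 > 0" "b + 2 > 0" "b + 3 > 0" "b + 4 > 0"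
    using assms by auto
  then show ?thesis by (simp add: divide_simps power2_eq_square) algebra
qed

theorem mainTheorem18:
  fixes n k1 k2 :: nat
  assumes "n \<ge> 3" and "1 \<le> k1" and "k1 < k2" and "k2 \<le> n - 1"
  shows "measure_pmf.expectation (yule_choices (n - 1))
           (\<lambda>cs. coal_frac n cs k2 * coal_frac n cs k1)
       = 4 * (real n + 1)^2 /
           ((real n - 1)^2 * (real k1 + 1) * (real k1 + 2) * (real k2 + 1) * (real k2 + 2))
         - 8 * (real n + 1) * (3 * real n - (real k2 - 2)) * (real n - (real k2 + 1)) /
           (real n * (real n - 1)^2 * (real k1 + 1) * (real k1 + 2) * (real k2 + 1)
            * (real k2 + 2) * (real k2 + 3) * (real k2 + 4))"
proof -
  have k: "1 \<le> k1" "k1 < k2" "k2 < n" using assms by auto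
  define C where "C = real (n choose 2)"
  have "measure_pmf.expectation (yule_choices (n - 1)) (\<lambda>cs. coal_frac n cs k2 * coal_frac n cs k1)
      = measure_pmf.expectation (yule_choices (n - 1))
          (\<lambda>cs. (corrected_moment k1 k2 n cs - 2 * cross_moment k1 k2 n cs) / C\<^sup>2)"
    using k coal_frac_eq_clades
    by (intro expectation_yule_choices_cong)
       (simp add: corrected_moment_def corrected_poly_def cross_moment_def C_def power2_eq_square)
  also have "\<dots> = (measure_pmf.expectation (yule_choices (n - 1)) (corrected_moment k1 k2 n)
      - 2 * measure_pmf.expectation (yule_choices (n - 1)) (cross_moment k1 k2 n)) / C\<^sup>2"
    by (simp add: integrable_yule_choices)
  also have "C = real n * (real n - 1) / 2"
    unfolding C_def by (induction n) (simp_all add: field_simps numeral_2_eq_2)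
  finally have moments: "measure_pmf.expectation (yule_choices (n - 1)) (\<lambda>cs. coal_frac n cs k2 * coal_frac n cs k1)
      = (measure_pmf.expectation (yule_choices (n - 1)) (corrected_moment k1 k2 n)
         - 2 * measure_pmf.expectation (yule_choices (n - 1)) (cross_moment k1 k2 n))
        / (real n * (real n - 1) / 2)\<^sup>2" .
  show ?thesis
    unfolding moments expectation_moments[OF k] using assms by (intro mixed_moment_closed_form) auto
qed

end
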